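(* Let $p\in\mathcal{P}_\tau$ and $1\le i\le N$. Then $\mathcal{D}_ip=0$ if and only if $\mathcal{U}_ip=p+\kappa\,\omega_ip$.
   Context: $\tau$ is a partition of $N$ and $\tau$ also denotes an irreducible representation of the symmetric group $\mathcal{S}_N$ on a vector space $V_\tau$ (over $\mathbb{R}(\kappa)$, $\kappa$ a parameter). $\mathcal{P}_\tau=\mathcal{P}\otimes V_\tau$ is the space of $V_\tau$-valued polynomials in $x=(x_1,\dots,x_N)$, with $\mathcal{S}_N$-action $wp(x)=\tau(w)p(xw)$ where $(xw)_i=x_{w(i)}$; $(i,j)$ denotes a transposition and $x(i,j)$ the vector $x$ with $x_i,x_j$ interchanged. Dunkl operators: $\mathcal{D}_i(p(x)\otimes T)=\frac{\partial p}{\partial x_i}\otimes T+\kappa\sum_{j\ne i}\frac{p(x)-p(x(i,j))}{x_i-x_j}\otimes\tau((i,j))T$; Cherednik–Dunkl operators: $\mathcal{U}_i(p(x)\otimes T)=\mathcal{D}_i(x_ip(x)\otimes T)-\kappa\sum_{j=1}^{i-1}p(x(i,j))\otimes\tau((i,j))T$ (both extended linearly). The Jucys–Murphy elements are $\omega_i=\sum_{j=i+1}^N(i,j)$ for $1\le i<N$ and $\omega_N=0$, acting on $\mathcal{P}_\tau$ through the $\mathcal{S}_N$-action. *)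

theory Defs
  imports "HOL-Analysis.Analysis" "HOL-Computational_Algebra.Fraction_Field"
    "HOL-Combinatorics.Transposition"
begin

type_synonym rk = "real poly fract"

definition kappa :: rk where
  "kappa = Fract [:0, 1:] 1"

text \<open>The representation space V_tau is modelled as rk^'n (a finite-dimensional
space over R(kappa) with a chosen basis); tau maps permutations of {1..N}
to matrices.\<close>

definition is_rep :: "nat \<Rightarrow> ((nat \<Rightarrow> nat) \<Rightarrow> rk^'n^'n) \<Rightarrow> bool" where
  "is_rep N tau \<longleftrightarrow> tau id = mat 1 \<and>
     (\<forall>s r. s permutes {1..N} \<longrightarrow> r permutes {1..N} \<longrightarrow> tau (s \<circ> r) = tau s ** tau r)"

definition ksubspace :: "(rk^'n) set \<Rightarrow> bool" where
  "ksubspace W \<longleftrightarrow> 0 \<in> W \<and> (\<forall>v\<in>W. \<forall>w\<in>W. v + w \<in> W) \<and> (\<forall>c v. v \<in> W \<longrightarrow> c *s v \<in> W)"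

definition irreducible_rep :: "nat \<Rightarrow> ((nat \<Rightarrow> nat) \<Rightarrow> rk^'n^'n) \<Rightarrow> bool" where
  "irreducible_rep N tau \<longleftrightarrow>
     (\<forall>W. ksubspace W \<and> (\<forall>s. s permutes {1..N} \<longrightarrow> (\<forall>v\<in>W. tau s *v v \<in> W))
        \<longrightarrow> W = {0} \<or> W = UNIV)"

text \<open>V_tau-valued polynomials in x_1..x_N: coefficient functions from exponent
vectors (nat \<Rightarrow> nat) to V_tau, finitely supported, involving only variables 1..N.\<close>
type_synonym 'n vpoly = "(nat \<Rightarrow> nat) \<Rightarrow> rk^'n"

definition is_vpoly :: "nat \<Rightarrow> 'n::finite vpoly \<Rightarrow> bool" where
  "is_vpoly N p \<longleftrightarrow> finite {a. p a \<noteq> 0} \<and>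
     (\<forall>a. p a \<noteq> 0 \<longrightarrow> (\<forall>k. a k \<noteq> 0 \<longrightarrow> k \<in> {1..N}))"

definition vderiv :: "nat \<Rightarrow> 'n::finite vpoly \<Rightarrow> 'n vpoly" where
  "vderiv i p = (\<lambda>a. of_nat (a i + 1) *s p (a(i := a i + 1)))"

definition vmulx :: "nat \<Rightarrow> 'n::finite vpoly \<Rightarrow> 'n vpoly" where
  "vmulx i p = (\<lambda>a. if a i = 0 then 0 else p (a(i := a i - 1)))"

text \<open>p(xw), where (xw)_k = x_(w k): coefficient of x^b in p(xw) is that of x^(b o w) in p\<close>
definition vsubst :: "(nat \<Rightarrow> nat) \<Rightarrow> 'n::finite vpoly \<Rightarrow> 'n vpoly" where
  "vsubst w p = (\<lambda>b. p (b \<circ> w))"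

definition vact :: "((nat \<Rightarrow> nat) \<Rightarrow> rk^'n^'n) \<Rightarrow> (nat \<Rightarrow> nat) \<Rightarrow> 'n::finite vpoly \<Rightarrow> 'n vpoly" where
  "vact tau w p = (\<lambda>b. tau w *v vsubst w p b)"

text \<open>divided difference (p(x) - p(x(i,j))) / (x_i - x_j), the unique polynomial quotient\<close>
definition vdivdiff :: "nat \<Rightarrow> nat \<Rightarrow> nat \<Rightarrow> 'n::finite vpoly \<Rightarrow> 'n vpoly" where
  "vdivdiff N i j p = (THE q. is_vpoly N q \<and>
     (\<forall>a. vmulx i q a - vmulx j q a = p a - vsubst (Transposition.transpose i j) p a))"

definition dunkl :: "nat \<Rightarrow> ((nat \<Rightarrow> nat) \<Rightarrow> rk^'n^'n) \<Rightarrow> nat \<Rightarrow> 'n::finite vpoly \<Rightarrow> 'n vpoly" where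
  "dunkl N tau i p = (\<lambda>a. vderiv i p a +
     kappa *s (\<Sum>j\<in>{1..N} - {i}. tau (Transposition.transpose i j) *v vdivdiff N i j p a))"

definition cherednik :: "nat \<Rightarrow> ((nat \<Rightarrow> nat) \<Rightarrow> rk^'n^'n) \<Rightarrow> nat \<Rightarrow> 'n::finite vpoly \<Rightarrow> 'n vpoly" where
  "cherednik N tau i p = (\<lambda>a. dunkl N tau i (vmulx i p) a -
     kappa *s (\<Sum>j\<in>{1..<i}. tau (Transposition.transpose i j) *v vsubst (Transposition.transpose i j) p a))"

definition jucys_murphy :: "nat \<Rightarrow> ((nat \<Rightarrow> nat) \<Rightarrow> rk^'n^'n) \<Rightarrow> nat \<Rightarrow> 'n::finite vpoly \<Rightarrow> 'n vpoly" where
  "jucys_murphy N tau i p = (\<lambda>a. \<Sum>j\<in>{i+1..N}. vact tau (Transposition.transpose i j) p a)"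

end

theory Submission
  imports Defs
begin

text \<open>Both the Leibniz rule for \<open>\<partial>\<^sub>i\<close> and the identity
\<open>(x\<^sub>i p - (x\<^sub>i p)(x(i,j))) / (x\<^sub>i - x\<^sub>j) = x\<^sub>i (p - p(x(i,j))) / (x\<^sub>i - x\<^sub>j) + p(x(i,j))\<close>
give \<open>\<D>\<^sub>i (x\<^sub>i p) = x\<^sub>i \<D>\<^sub>i p + p + \<kappa> \<Sum>\<^sub>j\<^sub>\<noteq>\<^sub>i (i,j) p\<close>. In \<open>\<U>\<^sub>i p\<close> the terms with
\<open>j < i\<close> cancel, leaving \<open>\<U>\<^sub>i p = x\<^sub>i \<D>\<^sub>i p + p + \<kappa> \<omega>\<^sub>i p\<close>, and multiplication by \<open>x\<^sub>i\<close>
is injective. The divided difference is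
defined by a description, so its existence is shown by an explicit quotient: its
coefficients are diagonal sums of those of \<open>p - p(x(i,j))\<close>, and they form a polynomial
because \<open>p - p(x(i,j))\<close> is antisymmetric under the swap.\<close>

lemma vmulx_fun_upd_Suc: "vmulx i f (a(i := a i + 1)) = f a"
  by (simp add: vmulx_def)

lemma vmulx_eq_0_iff: "vmulx i f = (\<lambda>_. 0) \<longleftrightarrow> f = (\<lambda>_. 0)"
  by (metis vmulx_fun_upd_Suc vmulx_def)

lemma vmulx_add: "vmulx i (\<lambda>a. f a + g a) a = vmulx i f a + vmulx i g a"
  by (simp add: vmulx_def)

lemma vmulx_diff: "vmulx i (\<lambda>a. f a - g a) a = vmulx i f a - vmulx i g a"
  by (simp add: vmulx_def)

lemma vmulx_commute: "i \<noteq> j \<Longrightarrow> vmulx j (vmulx i f) a = vmulx i (vmulx j f) a"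
  by (simp add: vmulx_def fun_upd_twist)

lemma vsubst_transpose_vmulx:
  assumes "i \<noteq> j"
  shows "vsubst (Transposition.transpose i j) (vmulx i p) a
       = vmulx j (vsubst (Transposition.transpose i j) p) a"
proof -
  have "(a \<circ> Transposition.transpose i j)(i := a j - 1)
      = a(j := a j - 1) \<circ> Transposition.transpose i j"
    using assms by (auto simp: fun_eq_iff Transposition.transpose_def)
  then show ?thesis using assms by (simp add: vsubst_def vmulx_def)
qed

definition swap_diff :: "nat \<Rightarrow> nat \<Rightarrow> 'n::finite vpoly \<Rightarrow> 'n vpoly" where
  "swap_diff i j p a = p a - vsubst (Transposition.transpose i j) p a"

text \<open>Expanding \<open>1/(x\<^sub>i - x\<^sub>j) = \<Sum>\<^sub>k x\<^sub>j\<^sup>k / x\<^sub>i\<^bsup>k+1\<^esup>\<close>, the coefficient of \<open>x\<^sup>a\<close> in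
\<open>x\<^sub>i (p - p(x(i,j))) / (x\<^sub>i - x\<^sub>j)\<close> is the sum of the coefficients of \<open>p - p(x(i,j))\<close>
along the diagonal through \<open>a\<close> towards \<open>x\<^sub>i\<close>.\<close>

definition swap_diff_diag_sum :: "nat \<Rightarrow> nat \<Rightarrow> 'n::finite vpoly \<Rightarrow> 'n vpoly" where
  "swap_diff_diag_sum i j p a = (\<Sum>k = 0..a j. swap_diff i j p (a(i := a i + k, j := a j - k)))"

definition divdiff_quot :: "nat \<Rightarrow> nat \<Rightarrow> 'n::finite vpoly \<Rightarrow> 'n vpoly" where
  "divdiff_quot i j p b = swap_diff_diag_sum i j p (b(i := b i + 1))"

lemma swap_diff_comp_transpose:
  "swap_diff i j p (a \<circ> Transposition.transpose i j) = - swap_diff i j p a"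
  by (simp add: swap_diff_def vsubst_def comp_assoc)

text \<open>The terms \<open>k\<close> and \<open>a\<^sub>j - k\<close> of the sum cancel by antisymmetry, and
\<open>R(\<kappa>)\<close> has characteristic 0.\<close>

lemma swap_diff_diag_sum_eq_0:
  assumes ij: "i \<noteq> j" and ai: "a i = 0"
  shows "swap_diff_diag_sum i j p a = 0"
proof -
  define f where "f k = swap_diff i j p (a(i := k, j := a j - k))" for k
  have "sum f {0..a j} = sum (\<lambda>k. f (a j + 0 - k)) {0..a j}"
    by (rule sum.atLeastAtMost_rev)
  also have "\<dots> = sum (\<lambda>k. - f k) {0..a j}"
  proof (rule sum.cong[OF refl])
    fix k assume "k \<in> {0..a j}"
    then have "a(i := a j - k, j := k) = a(i := k, j := a j - k) \<circ> Transposition.transpose i j"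
      using ij by (auto simp: fun_eq_iff Transposition.transpose_def)
    with \<open>k \<in> {0..a j}\<close> show "f (a j + 0 - k) = - f k"
      by (simp add: f_def swap_diff_comp_transpose)
  qed
  also have "\<dots> = - sum f {0..a j}" by (simp add: sum_negf)
  finally have "sum f {0..a j} = 0" by (simp add: vec_eq_iff)
  then show ?thesis using ai by (simp add: swap_diff_diag_sum_def f_def)
qed

lemma swap_diff_diag_sum_Suc:
  assumes ij: "i \<noteq> j" and aj: "a j = Suc m"
  shows "swap_diff_diag_sum i j p a
       = swap_diff i j p a + swap_diff_diag_sum i j p (a(i := a i + 1, j := m))"
  unfolding swap_diff_diag_sum_def aj using ij
  by (simp add: sum.atLeast0_atMost_Suc_shift aj fun_upd_idem del: sum.cl_ivl_Suc)

lemma swap_diff_diag_sum_0: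
  "a j = 0 \<Longrightarrow> swap_diff_diag_sum i j p a = swap_diff i j p a"
  by (simp add: swap_diff_diag_sum_def fun_upd_idem)

lemma divdiff_quot_eq:
  assumes ij: "i \<noteq> j"
  shows "vmulx i (divdiff_quot i j p) a - vmulx j (divdiff_quot i j p) a = swap_diff i j p a"
proof -
  have xi: "vmulx i (divdiff_quot i j p) a = swap_diff_diag_sum i j p a"
    by (cases "a i = 0") (auto simp: vmulx_def divdiff_quot_def swap_diff_diag_sum_eq_0[OF ij])
  show ?thesis
  proof (cases "a j")
    case 0
    then show ?thesis unfolding xi by (simp add: vmulx_def swap_diff_diag_sum_0)
  next
    case (Suc m)
    then show ?thesis unfolding xi using ij
      by (simp add: vmulx_def divdiff_quot_def swap_diff_diag_sum_Suc fun_upd_twist)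
  qed
qed

lemma is_vpoly_add:
  assumes "is_vpoly N f" "is_vpoly N g"
  shows "is_vpoly N (\<lambda>a. f a + g a)"
proof -
  have "{a. f a + g a \<noteq> 0} \<subseteq> {a. f a \<noteq> 0} \<union> {a. g a \<noteq> 0}" by auto
  with assms show ?thesis unfolding is_vpoly_def
    by (metis (no_types, lifting) add_0 finite_UnI finite_subset)
qed

lemma is_vpoly_diff:
  assumes "is_vpoly N f" "is_vpoly N g"
  shows "is_vpoly N (\<lambda>a. f a - g a)"
proof -
  have "{a. f a - g a \<noteq> 0} \<subseteq> {a. f a \<noteq> 0} \<union> {a. g a \<noteq> 0}" by auto
  with assms show ?thesis unfolding is_vpoly_def
    by (metis (no_types, lifting) diff_self diff_zero finite_UnI finite_subset)
qed

lemma is_vpoly_vmulx: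
  assumes i: "i \<in> {1..N}" and q: "is_vpoly N q"
  shows "is_vpoly N (vmulx i q)"
  unfolding is_vpoly_def
proof (intro conjI allI impI)
  have "{a. vmulx i q a \<noteq> 0} \<subseteq> (\<lambda>a. a(i := a i + 1)) ` {a. q a \<noteq> 0}"
  proof
    fix a assume "a \<in> {a. vmulx i q a \<noteq> 0}"
    then show "a \<in> (\<lambda>a. a(i := a i + 1)) ` {a. q a \<noteq> 0}"
      by (intro image_eqI[where x="a(i := a i - 1)"]) (auto simp: vmulx_def split: if_splits)
  qed
  then show "finite {a. vmulx i q a \<noteq> 0}"
    using q unfolding is_vpoly_def by (meson finite_imageI finite_subset)
  fix a k assume "vmulx i q a \<noteq> 0" "a k \<noteq> 0"
  then show "k \<in> {1..N}" using i q unfolding is_vpoly_def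
    by (cases "k = i") (auto simp: vmulx_def split: if_splits)
qed

lemma is_vpoly_vsubst_transpose:
  assumes i: "i \<in> {1..N}" and j: "j \<in> {1..N}" and p: "is_vpoly N p"
  shows "is_vpoly N (vsubst (Transposition.transpose i j) p)"
  unfolding is_vpoly_def
proof (intro conjI allI impI)
  have "{a. vsubst (Transposition.transpose i j) p a \<noteq> 0}
      = (\<lambda>b. b \<circ> Transposition.transpose i j) ` {a. p a \<noteq> 0}"
  proof (intro equalityI subsetI)
    fix a assume "a \<in> {a. vsubst (Transposition.transpose i j) p a \<noteq> 0}"
    then show "a \<in> (\<lambda>b. b \<circ> Transposition.transpose i j) ` {a. p a \<noteq> 0}"
      by (intro image_eqI[where x="a \<circ> Transposition.transpose i j"]) (auto simp: vsubst_def comp_assoc)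
  qed (auto simp: vsubst_def comp_assoc)
  then show "finite {a. vsubst (Transposition.transpose i j) p a \<noteq> 0}"
    using p unfolding is_vpoly_def by simp
  fix a k assume "vsubst (Transposition.transpose i j) p a \<noteq> 0" and "a k \<noteq> 0"
  then have "Transposition.transpose i j k \<in> {1..N}"
    using p unfolding is_vpoly_def vsubst_def by (metis comp_apply transpose_involutory)
  then show "k \<in> {1..N}" using i j
    by (auto simp: Transposition.transpose_def split: if_splits)
qed

lemma is_vpoly_swap_diff:
  "i \<in> {1..N} \<Longrightarrow> j \<in> {1..N} \<Longrightarrow> is_vpoly N p \<Longrightarrow> is_vpoly N (swap_diff i j p)"
  using is_vpoly_diff[OF _ is_vpoly_vsubst_transpose, of N p i j]
  by (simp add: swap_diff_def[abs_def])

lemma divdiff_quot_nonzero_imp: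
  assumes ij: "i \<noteq> j" and b: "divdiff_quot i j p b \<noteq> 0"
  obtains a where "swap_diff i j p a \<noteq> 0" "b = a(i := b i, j := b j)"
    and "b i \<le> a i" "b j \<le> a i + a j"
proof -
  obtain k where "k \<in> {0..b j}"
    and "swap_diff i j p (b(i := b i + 1 + k, j := b j - k)) \<noteq> 0"
    using b ij unfolding divdiff_quot_def swap_diff_diag_sum_def
    by (auto elim!: sum.not_neutral_contains_not_neutral)
  with ij show ?thesis
    by (intro that[of "b(i := b i + 1 + k, j := b j - k)"]) auto
qed

lemma is_vpoly_divdiff_quot:
  assumes ij: "i \<noteq> j" and i: "i \<in> {1..N}" and j: "j \<in> {1..N}" and p: "is_vpoly N p"
  shows "is_vpoly N (divdiff_quot i j p)"
  unfolding is_vpoly_def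
proof (intro conjI allI impI)
  have r: "is_vpoly N (swap_diff i j p)" by (rule is_vpoly_swap_diff[OF i j p])
  have "{b. divdiff_quot i j p b \<noteq> 0} \<subseteq> (\<Union>a\<in>{a. swap_diff i j p a \<noteq> 0}.
          (\<lambda>(x, y). a(i := x, j := y)) ` ({..a i} \<times> {..a i + a j}))"
  proof
    fix b assume "b \<in> {b. divdiff_quot i j p b \<noteq> 0}"
    then obtain a where "swap_diff i j p a \<noteq> 0" "b = a(i := b i, j := b j)"
      "b i \<le> a i" "b j \<le> a i + a j"
      using divdiff_quot_nonzero_imp[OF ij] by blast
    then show "b \<in> (\<Union>a\<in>{a. swap_diff i j p a \<noteq> 0}.
          (\<lambda>(x, y). a(i := x, j := y)) ` ({..a i} \<times> {..a i + a j}))"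
      by (intro UN_I[of a]) (auto intro!: image_eqI[where x="(b i, b j)"])
  qed
  then show "finite {b. divdiff_quot i j p b \<noteq> 0}"
    using r unfolding is_vpoly_def by (auto intro: finite_subset)
  fix b l assume b: "divdiff_quot i j p b \<noteq> 0" and l: "b l \<noteq> 0"
  obtain a where a: "swap_diff i j p a \<noteq> 0" and ba: "b = a(i := b i, j := b j)"
    using divdiff_quot_nonzero_imp[OF ij b] by blast
  show "l \<in> {1..N}"
  proof (cases "l = i \<or> l = j")
    case True
    with i j show ?thesis by auto
  next
    case False
    with ba l have "a l \<noteq> 0" by (metis fun_upd_other)
    with a r show ?thesis unfolding is_vpoly_def by blast
  qed
qed

text \<open>The coefficient of \<open>x\<^bsup>b + e\<^sub>i\<^esup>\<close> in \<open>(x\<^sub>i - x\<^sub>j) q\<close> is \<open>q(b) - q(b + e\<^sub>i - e\<^sub>j)\<close>, so \<open>q\<close> is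
recovered by induction on \<open>b\<^sub>j\<close>; no finiteness of the support is needed.\<close>

lemma vmulx_diff_inject:
  assumes ij: "i \<noteq> j"
    and eq: "\<And>a. vmulx i q1 a - vmulx j q1 a = vmulx i q2 a - vmulx j q2 a"
  shows "q1 = q2"
proof
  fix b
  show "q1 b = q2 b"
  proof (induction "b j" arbitrary: b)
    case 0
    then show ?case using eq[of "b(i := b i + 1)"] ij by (simp add: vmulx_def)
  next
    case (Suc m)
    have "q1 (b(i := b i + 1, j := m)) = q2 (b(i := b i + 1, j := m))"
      using Suc.hyps(1)[of "b(i := b i + 1, j := m)"] by simp
    then show ?case using eq[of "b(i := b i + 1)"] ij Suc.hyps(2)[symmetric]
      by (simp add: vmulx_def)
  qed
qed

lemma vdivdiff_eqI:
  assumes ij: "i \<noteq> j" and q: "is_vpoly N q"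
    and eq: "\<And>a. vmulx i q a - vmulx j q a = swap_diff i j p a"
  shows "vdivdiff N i j p = q"
  unfolding vdivdiff_def
proof (rule the_equality)
  show "is_vpoly N q \<and>
      (\<forall>a. vmulx i q a - vmulx j q a = p a - vsubst (Transposition.transpose i j) p a)"
    using q eq by (simp add: swap_diff_def)
next
  fix q' assume "is_vpoly N q' \<and>
      (\<forall>a. vmulx i q' a - vmulx j q' a = p a - vsubst (Transposition.transpose i j) p a)"
  then show "q' = q" using eq by (intro vmulx_diff_inject[OF ij]) (simp add: swap_diff_def)
qed

lemma vdivdiff_eq_divdiff_quot:
  "i \<noteq> j \<Longrightarrow> i \<in> {1..N} \<Longrightarrow> j \<in> {1..N} \<Longrightarrow> is_vpoly N p
    \<Longrightarrow> vdivdiff N i j p = divdiff_quot i j p"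
  by (simp add: vdivdiff_eqI is_vpoly_divdiff_quot divdiff_quot_eq)

lemma vdivdiff_vmulx:
  assumes ij: "i \<noteq> j" and i: "i \<in> {1..N}" and j: "j \<in> {1..N}" and p: "is_vpoly N p"
  shows "vdivdiff N i j (vmulx i p)
       = (\<lambda>a. vmulx i (vdivdiff N i j p) a + vsubst (Transposition.transpose i j) p a)"
proof -
  let ?Q = "divdiff_quot i j p" and ?S = "vsubst (Transposition.transpose i j) p"
  have "vmulx i (\<lambda>a. vmulx i ?Q a + ?S a) a - vmulx j (\<lambda>a. vmulx i ?Q a + ?S a) a
      = swap_diff i j (vmulx i p) a" for a
  proof -
    have "vmulx i (\<lambda>a. vmulx i ?Q a + ?S a) a - vmulx j (\<lambda>a. vmulx i ?Q a + ?S a) a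
        = vmulx i (\<lambda>a. vmulx i ?Q a - vmulx j ?Q a) a + vmulx i ?S a - vmulx j ?S a"
      by (simp add: vmulx_add vmulx_diff vmulx_commute[OF ij])
    also have "\<dots> = vmulx i p a - vmulx j ?S a"
      by (simp add: divdiff_quot_eq[OF ij] swap_diff_def vmulx_diff)
    also have "\<dots> = swap_diff i j (vmulx i p) a"
      by (simp add: swap_diff_def vsubst_transpose_vmulx[OF ij])
    finally show ?thesis .
  qed
  then have "vdivdiff N i j (vmulx i p) = (\<lambda>a. vmulx i ?Q a + ?S a)"
    by (intro vdivdiff_eqI[OF ij] is_vpoly_add is_vpoly_vmulx is_vpoly_divdiff_quot
        is_vpoly_vsubst_transpose ij i j p)
  then show ?thesis by (simp add: vdivdiff_eq_divdiff_quot[OF ij i j p])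
qed

lemma vderiv_vmulx: "vderiv i (vmulx i p) a = p a + vmulx i (vderiv i p) a"
  by (cases "a i") (simp_all add: vderiv_def vmulx_def fun_upd_idem vector_sadd_rdistrib)

lemma dunkl_vmulx:
  assumes i: "i \<in> {1..N}" and p: "is_vpoly N p"
  shows "dunkl N tau i (vmulx i p) a = vmulx i (dunkl N tau i p) a + p a +
     kappa *s (\<Sum>j\<in>{1..N} - {i}.
       tau (Transposition.transpose i j) *v vsubst (Transposition.transpose i j) p a)"
proof -
  let ?T = "\<lambda>j. tau (Transposition.transpose i j)"
  have "vmulx i (dunkl N tau i p) a = vmulx i (vderiv i p) a +
      kappa *s (\<Sum>j\<in>{1..N} - {i}. ?T j *v vmulx i (vdivdiff N i j p) a)"
    by (cases "a i = 0") (simp_all add: vmulx_def dunkl_def)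
  moreover have "(\<Sum>j\<in>{1..N} - {i}. ?T j *v vdivdiff N i j (vmulx i p) a)
     = (\<Sum>j\<in>{1..N} - {i}. ?T j *v vmulx i (vdivdiff N i j p) a
        + ?T j *v vsubst (Transposition.transpose i j) p a)"
    using i p by (intro sum.cong) (auto simp: vdivdiff_vmulx matrix_vector_right_distrib)
  ultimately show ?thesis
    by (simp add: dunkl_def vderiv_vmulx sum.distrib vector_add_ldistrib algebra_simps)
qed

lemma cherednik_eq_vmulx_dunkl:
  assumes i: "i \<in> {1..N}" and p: "is_vpoly N p"
  shows "cherednik N tau i p a
       = vmulx i (dunkl N tau i p) a + (p a + kappa *s jucys_murphy N tau i p a)"
proof -
  let ?f = "\<lambda>j. tau (Transposition.transpose i j) *v vsubst (Transposition.transpose i j) p a"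
  have split: "{1..N} - {i} = {1..<i} \<union> {i+1..N}" using i by auto
  have "sum ?f ({1..N} - {i}) = sum ?f {1..<i} + sum ?f {i+1..N}"
    unfolding split by (rule sum.union_disjoint) auto
  moreover have "jucys_murphy N tau i p a = sum ?f {i+1..N}"
    by (simp add: jucys_murphy_def vact_def)
  ultimately show ?thesis
    by (simp add: cherednik_def dunkl_vmulx[OF i p] vector_add_ldistrib algebra_simps)
qed

theorem proposition6p1:
  fixes N i :: nat
    and tau :: "(nat \<Rightarrow> nat) \<Rightarrow> rk^'n::finite^'n"
    and p :: "'n vpoly"
  assumes "is_rep N tau" and "irreducible_rep N tau"
    and "is_vpoly N p" and "1 \<le> i" and "i \<le> N"
  shows "dunkl N tau i p = (\<lambda>_. 0) \<longleftrightarrow>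
         cherednik N tau i p = (\<lambda>a. p a + kappa *s jucys_murphy N tau i p a)"
proof -
  have i: "i \<in> {1..N}" using assms(4,5) by simp
  have "cherednik N tau i p = (\<lambda>a. p a + kappa *s jucys_murphy N tau i p a)
      \<longleftrightarrow> vmulx i (dunkl N tau i p) = (\<lambda>_. 0)"
    by (simp add: fun_eq_iff cherednik_eq_vmulx_dunkl[OF i assms(3)])
  then show ?thesis by (simp add: vmulx_eq_0_iff)
qed

end
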